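(* Let $G$ be a finite simple graph on $n\ge3$ vertices and let $A\ne0$ be a real symmetric weighted adjacency matrix of $G$. Then $$\sup_{\boldsymbol v\in\mathcal S_n}\{|\boldsymbol v|^2:\langle\boldsymbol v,A\boldsymbol v\rangle=0\}=\min\{W_A(x):\lambda_{\min}(A)^{-1}\le x\le\lambda_{\max}(A)^{-1}\}.$$
   Context: A weighted adjacency matrix is a real symmetric $A$ with $A_{ii}=0$ and $A_{ij}=0$ for non-adjacent $i\ne j$; for $A\neq 0$, $\lambda_{\min}(A)<0<\lambda_{\max}(A)$. $\mathcal S_n=\{\boldsymbol v\in\mathbb R^n:\langle\boldsymbol 1,\boldsymbol v\rangle=|\boldsymbol v|^2\}$ with $\boldsymbol 1$ the all-ones vector. $W_A(x)=\sum_{\lambda\in\sigma(A)}\frac{\langle\boldsymbol 1,P_\lambda\boldsymbol 1\rangle}{1-\lambda x}$ with $P_\lambda$ the orthogonal eigenprojections of $A$, terms with $\langle\boldsymbol 1,P_\lambda\boldsymbol 1\rangle=0$ omitted, and value $+\infty$ at a pole. *)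

theory Defs
  imports "HOL-Analysis.Analysis"
begin

definition ones :: "real^'n" where "ones = vec 1"

definition eigvals :: "real^'n^'n \<Rightarrow> real set" where
  "eigvals A = {l. \<exists>v. v \<noteq> 0 \<and> A *v v = scaleR l v}"

definition eigproj :: "real^'n^'n \<Rightarrow> real \<Rightarrow> real^'n \<Rightarrow> real^'n" where
  "eigproj A l x = closest_point {v. A *v v = scaleR l v} x"

definition weighted_adj :: "('n \<Rightarrow> 'n \<Rightarrow> bool) \<Rightarrow> real^'n^'n \<Rightarrow> bool" where
  "weighted_adj E A \<longleftrightarrow> transpose A = A \<and> (\<forall>i. A $ i $ i = 0) \<and>
     (\<forall>i j. i \<noteq> j \<and> \<not> E i j \<longrightarrow> A $ i $ j = 0)"

definition S_set :: "(real^'n) set" where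
  "S_set = {v. ones \<bullet> v = (norm v)\<^sup>2}"

definition W_A :: "real^'n^'n \<Rightarrow> real \<Rightarrow> ereal" where
  "W_A A x = (let w = (\<lambda>l. ones \<bullet> eigproj A l ones);
                  L = {l \<in> eigvals A. w l \<noteq> 0}
              in if \<exists>l\<in>L. 1 - l * x = 0 then PInfty
                 else ereal (\<Sum>l\<in>L. w l / (1 - l * x)))"

end

theory Submission
  imports Defs
begin

(* For x between 1/lambda_min and 1/lambda_max the quadratic form Q_x(y) = |y|^2 - x<y,Ay> is
   positive semidefinite. If no main eigenvalue (one whose eigenprojection of 1 is nonzero)
   equals 1/x, the vector u = sum_l P_l 1 / (1 - l x) solves (I - x A) u = 1 and <1,u> = W_A(x);
   expanding Q_x(u - v) >= 0 gives |v|^2 <= W_A(x) for every v in S_n with <v,Av> = 0.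
   On the interval W_A is convex with derivative W'(x) = <u,Au>, and |u|^2 = <1,u> + x W'(x).
   A minimiser x0 is either a critical point, where u itself attains the bound, or an endpoint
   1/lambda with lambda not main and x0 W'(x0) <= 0; there u plus a suitably scaled
   lambda-eigenvector, orthogonal to 1 and to u, attains it. *)

section \<open>Spectral theory of real symmetric matrices\<close>

lemma inner_matrix_vector_symmetric:
  fixes A :: "real^'n^'n"
  assumes "transpose A = A"
  shows "(A *v x) \<bullet> y = x \<bullet> (A *v y)"
  by (metis assms dot_lmul_matrix vector_transpose_matrix)

abbreviation eigenspace :: "real^'n^'n \<Rightarrow> real \<Rightarrow> (real^'n) set" where
  "eigenspace A l \<equiv> {v. A *v v = l *\<^sub>R v}"

lemma subspace_eigenspace: "subspace (eigenspace A l)"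
  by (auto simp: subspace_def algebra_simps)

lemma eigenvectors_orthogonal:
  fixes A :: "real^'n^'n"
  assumes "transpose A = A" "A *v v = l *\<^sub>R v" "A *v w = m *\<^sub>R w" "l \<noteq> m"
  shows "v \<bullet> w = 0"
proof -
  have "l * (v \<bullet> w) = m * (v \<bullet> w)"
    using inner_matrix_vector_symmetric[OF assms(1), of v w] assms(2,3) by simp
  then show ?thesis using assms(4) by simp
qed

lemma eigproj_eigenvector: "A *v eigproj A l x = l *\<^sub>R eigproj A l x"
proof -
  have "eigenspace A l \<noteq> {}" by (metis empty_iff subspace_0 subspace_eigenspace)
  then show ?thesis unfolding eigproj_def
    using closest_point_in_set[OF closed_subspace[OF subspace_eigenspace]] by blast
qed

lemma eigproj_residual_orthogonal:
  assumes "A *v y = l *\<^sub>R y"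
  shows "(x - eigproj A l x) \<bullet> y = 0"
proof -
  let ?p = "eigproj A l x"
  have "?p + y \<in> eigenspace A l" "?p - y \<in> eigenspace A l"
    using eigproj_eigenvector[of A l x] assms by (auto simp: algebra_simps)
  then have "(x - ?p) \<bullet> ((?p + y) - ?p) \<le> 0" "(x - ?p) \<bullet> ((?p - y) - ?p) \<le> 0"
    unfolding eigproj_def
    using closest_point_dot[OF subspace_imp_convex closed_subspace, OF subspace_eigenspace subspace_eigenspace]
    by blast+
  then show ?thesis by (simp add: inner_diff_right)
qed

lemma inner_eigproj_self: "x \<bullet> eigproj A l x = eigproj A l x \<bullet> eigproj A l x"
  using eigproj_residual_orthogonal[OF eigproj_eigenvector, where x = x and A = A and l = l]
  by (simp add: inner_diff_left)

lemma eigproj_orthogonal: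
  fixes A :: "real^'n^'n"
  assumes "transpose A = A" "l \<noteq> m"
  shows "eigproj A l x \<bullet> eigproj A m y = 0"
  using eigenvectors_orthogonal[OF assms(1) eigproj_eigenvector eigproj_eigenvector assms(2)] .

lemma linear_coeff_eq_0_if_quadratic_nonpos:
  fixes b c :: real
  assumes "\<And>t. b * t + c * t\<^sup>2 \<le> 0"
  shows "b = 0"
proof (rule ccontr)
  assume "b \<noteq> 0"
  define e where "e = 1 / (2 * (\<bar>c\<bar> + 1))"
  have "0 < e" unfolding e_def by simp
  moreover have "\<bar>c * e\<bar> \<le> 1/2" unfolding e_def by (simp add: abs_mult field_simps)
  ultimately have "0 < b\<^sup>2 * e * (1 + c * e)"
    using \<open>b \<noteq> 0\<close> by (intro mult_pos_pos) auto
  also have "b\<^sup>2 * e * (1 + c * e) = b * (b * e) + c * (b * e)\<^sup>2"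
    by (simp add: power2_eq_square algebra_simps)
  finally show False using assms[of "b * e"] by simp
qed

lemma Rayleigh_maximiser_is_eigenvector:
  fixes A :: "real^'n^'n"
  assumes sym: "transpose A = A" and U: "subspace U" and inv: "\<And>y. y \<in> U \<Longrightarrow> A *v y \<in> U"
    and x: "x \<in> U" "x \<bullet> x = 1"
    and max: "\<And>y. y \<in> U \<Longrightarrow> y \<bullet> (A *v y) \<le> (x \<bullet> (A *v x)) * (y \<bullet> y)"
  shows "A *v x = (x \<bullet> (A *v x)) *\<^sub>R x"
proof -
  define \<mu> where "\<mu> = x \<bullet> (A *v x)"
  define w where "w = A *v x - \<mu> *\<^sub>R x"
  have "w \<in> U" unfolding w_def using inv x U by (intro subspace_diff subspace_scale) auto
  have "2 * (w \<bullet> w) * t + (w \<bullet> (A *v w) - \<mu> * (w \<bullet> w)) * t\<^sup>2 \<le> 0" for t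
  proof -
    have "x + t *\<^sub>R w \<in> U" using x \<open>w \<in> U\<close> U by (intro subspace_add subspace_scale) auto
    then have le: "(x + t *\<^sub>R w) \<bullet> (A *v (x + t *\<^sub>R w)) \<le> \<mu> * ((x + t *\<^sub>R w) \<bullet> (x + t *\<^sub>R w))"
      unfolding \<mu>_def by (rule max)
    have "(A *v w) \<bullet> x = w \<bullet> (A *v x)" by (rule inner_matrix_vector_symmetric[OF sym])
    then have quad: "(x + t *\<^sub>R w) \<bullet> (A *v (x + t *\<^sub>R w))
        = \<mu> + 2 * t * (w \<bullet> (A *v x)) + t\<^sup>2 * (w \<bullet> (A *v w))"
      by (simp add: algebra_simps inner_add_left inner_add_right \<mu>_def power2_eq_square inner_commute)
    have sq: "(x + t *\<^sub>R w) \<bullet> (x + t *\<^sub>R w) = 1 + 2 * t * (w \<bullet> x) + t\<^sup>2 * (w \<bullet> w)"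
      using x(2) by (simp add: algebra_simps inner_add_left inner_add_right power2_eq_square inner_commute)
    have ww: "w \<bullet> w = w \<bullet> (A *v x) - \<mu> * (w \<bullet> x)"
      unfolding w_def by (simp add: inner_diff_right)
    show ?thesis using le unfolding quad sq ww by (simp add: algebra_simps)
  qed
  then have "2 * (w \<bullet> w) = 0" by (rule linear_coeff_eq_0_if_quadratic_nonpos)
  then show ?thesis unfolding w_def \<mu>_def by simp
qed

lemma Rayleigh_max_eigenvector:
  fixes A :: "real^'n^'n"
  assumes sym: "transpose A = A" and U: "subspace U" and inv: "\<And>y. y \<in> U \<Longrightarrow> A *v y \<in> U"
    and nontrivial: "U \<noteq> {0}"
  obtains x \<mu> where "x \<in> U" "x \<noteq> 0" "A *v x = \<mu> *\<^sub>R x"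
    "\<And>y. y \<in> U \<Longrightarrow> y \<bullet> (A *v y) \<le> \<mu> * (y \<bullet> y)"
proof -
  let ?q = "\<lambda>y. y \<bullet> (A *v y)"
  define K where "K = U \<inter> sphere 0 1"
  have normalized_in_K: "y /\<^sub>R norm y \<in> K" if "y \<in> U" "y \<noteq> 0" for y
    unfolding K_def using that subspace_scale[OF U] by auto
  have "compact K" unfolding K_def
    by (intro closed_Int_compact closed_subspace U compact_sphere)
  moreover have "K \<noteq> {}" using nontrivial subspace_0[OF U] normalized_in_K by blast
  moreover have "continuous_on K ?q"
    by (intro continuous_on_inner continuous_on_id matrix_vector_mult_linear_continuous_on)
  ultimately obtain x where x: "x \<in> K" and max: "\<And>y. y \<in> K \<Longrightarrow> ?q y \<le> ?q x"
    using continuous_attains_sup by metis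
  have bound: "?q y \<le> ?q x * (y \<bullet> y)" if "y \<in> U" for y
  proof (cases "y = 0")
    case False
    have "?q (y /\<^sub>R norm y) \<le> ?q x" using max normalized_in_K[OF that False] .
    moreover have "?q (y /\<^sub>R norm y) = ?q y / (y \<bullet> y)"
      using False
      by (simp add: matrix_vector_mult_scaleR power2_norm_eq_inner[symmetric] power2_eq_square field_simps)
    ultimately show ?thesis using False by (simp add: divide_le_eq inner_gt_zero_iff)
  qed simp
  have "x \<in> U" "x \<bullet> x = 1" using x by (auto simp: K_def norm_eq_1)
  with bound show thesis
    using that Rayleigh_maximiser_is_eigenvector[OF sym U inv] by force
qed

lemma finite_eigvals:
  fixes A :: "real^'n^'n"
  assumes sym: "transpose A = A"
  shows "finite (eigvals A)"
proof -
  define e where "e l = (SOME v. v \<noteq> 0 \<and> A *v v = l *\<^sub>R v)" for l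
  have e: "e l \<noteq> 0" "A *v e l = l *\<^sub>R e l" if "l \<in> eigvals A" for l
    using someI_ex[of "\<lambda>v. v \<noteq> 0 \<and> A *v v = l *\<^sub>R v"] that unfolding eigvals_def e_def by auto
  have "inj_on e (eigvals A)"
  proof (rule inj_onI)
    fix l m assume lm: "l \<in> eigvals A" "m \<in> eigvals A" "e l = e m"
    then have "l *\<^sub>R e l = m *\<^sub>R e l" using e by metis
    then show "l = m" using e(1)[OF lm(1)] by simp
  qed
  moreover have "independent (e ` eigvals A)"
  proof (rule pairwise_orthogonal_independent)
    show "pairwise orthogonal (e ` eigvals A)"
      using e by (auto simp: pairwise_def orthogonal_def intro!: eigenvectors_orthogonal[OF sym])
    show "0 \<notin> e ` eigvals A" using e by auto
  qed
  ultimately show ?thesis using independent_bound finite_imageD by blast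
qed

lemma orthogonal_to_eigenvectors_imp_zero:
  fixes A :: "real^'n^'n"
  assumes sym: "transpose A = A"
    and orth: "\<And>v l. A *v v = l *\<^sub>R v \<Longrightarrow> r \<bullet> v = 0"
  shows "r = 0"
proof (rule ccontr)
  assume "r \<noteq> 0"
  \<comment> \<open>\<open>U\<close> is \<open>A\<close>-invariant, so it would contain an eigenvector, which is orthogonal to itself.\<close>
  define U where "U = {y. \<forall>v l. A *v v = l *\<^sub>R v \<longrightarrow> y \<bullet> v = 0}"
  have "subspace U" unfolding U_def subspace_def by (auto simp: inner_add_left)
  moreover have "A *v y \<in> U" if "y \<in> U" for y
    using that inner_matrix_vector_symmetric[OF sym, of y] unfolding U_def by auto
  moreover have "U \<noteq> {0}" using orth \<open>r \<noteq> 0\<close> unfolding U_def by blast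
  ultimately obtain x \<mu> where "x \<in> U" "x \<noteq> 0" "A *v x = \<mu> *\<^sub>R x"
    using Rayleigh_max_eigenvector[OF sym] by metis
  then show False unfolding U_def by auto
qed

lemma Max_eigvals:
  fixes A :: "real^'n^'n"
  assumes sym: "transpose A = A"
  shows "Max (eigvals A) \<in> eigvals A" and "y \<bullet> (A *v y) \<le> Max (eigvals A) * (y \<bullet> y)"
proof -
  obtain x \<mu> where x: "x \<noteq> 0" "A *v x = \<mu> *\<^sub>R x"
    and bound: "\<And>y. y \<bullet> (A *v y) \<le> \<mu> * (y \<bullet> y)"
  proof (rule Rayleigh_max_eigenvector[OF sym subspace_UNIV])
    have "axis undefined 1 \<noteq> (0 :: real^'n)" by simp
    then show "(UNIV :: (real^'n) set) \<noteq> {0}" by blast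
  qed (auto intro: that)
  have "\<mu> \<in> eigvals A" using x unfolding eigvals_def by blast
  moreover have "l \<le> \<mu>" if l: "l \<in> eigvals A" for l
  proof -
    obtain v where v: "v \<noteq> 0" "A *v v = l *\<^sub>R v" using l unfolding eigvals_def by blast
    then have "l * (v \<bullet> v) \<le> \<mu> * (v \<bullet> v)" using bound[of v] by simp
    then show ?thesis using v by simp
  qed
  ultimately have "Max (eigvals A) = \<mu>" using finite_eigvals[OF sym] by (intro Max_eqI) auto
  then show "Max (eigvals A) \<in> eigvals A" "y \<bullet> (A *v y) \<le> Max (eigvals A) * (y \<bullet> y)"
    using \<open>\<mu> \<in> eigvals A\<close> bound by simp_all
qed

lemma matrix_vector_mult_uminus_left:
  fixes A :: "'a::ring_1^'n^'m"
  shows "(- A) *v x = - (A *v x)"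
  by (simp add: matrix_vector_mult_def vec_eq_iff sum_negf)

lemma transpose_uminus: "transpose (- A) = - transpose A"
  by (simp add: transpose_def vec_eq_iff)

lemma eigvals_uminus: "eigvals (- A) = uminus ` eigvals A"
proof -
  have "(- A) *v v = l *\<^sub>R v \<longleftrightarrow> A *v v = (- l) *\<^sub>R v" for v l
    by (metis minus_minus scaleR_minus_left matrix_vector_mult_uminus_left)
  then have "l \<in> eigvals (- A) \<longleftrightarrow> - l \<in> eigvals A" for l
    unfolding eigvals_def mem_Collect_eq by blast
  then show ?thesis by (intro set_eqI) (metis image_iff minus_minus)
qed

lemma Min_eigvals:
  fixes A :: "real^'n^'n"
  assumes sym: "transpose A = A"
  shows "Min (eigvals A) \<in> eigvals A" and "Min (eigvals A) * (y \<bullet> y) \<le> y \<bullet> (A *v y)"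
proof -
  have sym': "transpose (- A) = - A" using sym by (simp add: transpose_uminus)
  have "eigvals A \<noteq> {}" using Max_eigvals(1)[OF sym] by blast
  then have Min: "Min (eigvals A) = - Max (eigvals (- A))"
    by (simp add: eigvals_uminus finite_eigvals[OF sym] image_image)
  show "Min (eigvals A) \<in> eigvals A"
    using Max_eigvals(1)[OF sym'] unfolding Min eigvals_uminus by auto
  show "Min (eigvals A) * (y \<bullet> y) \<le> y \<bullet> (A *v y)"
    using Max_eigvals(2)[OF sym', of y] unfolding Min by (simp add: matrix_vector_mult_uminus_left)
qed

lemma sum_eigproj:
  fixes A :: "real^'n^'n"
  assumes sym: "transpose A = A"
  shows "(\<Sum>l\<in>eigvals A. eigproj A l x) = x"
proof -
  have "(x - (\<Sum>l\<in>eigvals A. eigproj A l x)) \<bullet> v = 0" if v: "A *v v = m *\<^sub>R v" for v m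
  proof (cases "m \<in> eigvals A")
    case True
    have "(\<Sum>l\<in>eigvals A. eigproj A l x \<bullet> v) = (\<Sum>l\<in>{m}. eigproj A l x \<bullet> v)"
      using True eigenvectors_orthogonal[OF sym eigproj_eigenvector v]
      by (intro sum.mono_neutral_right finite_eigvals[OF sym]) auto
    then show ?thesis
      using eigproj_residual_orthogonal[OF v, of x] by (simp add: inner_diff_left inner_sum_left)
  next
    case False
    then have "v = 0" using v unfolding eigvals_def by blast
    then show ?thesis by simp
  qed
  then show ?thesis using orthogonal_to_eigenvectors_imp_zero[OF sym] by (metis right_minus_eq)
qed

lemma inner_sum_eigproj:
  fixes A :: "real^'n^'n"
  assumes sym: "transpose A = A" and fin: "finite L"
  shows "(\<Sum>l\<in>L. c l *\<^sub>R eigproj A l x) \<bullet> (\<Sum>l\<in>L. d l *\<^sub>R eigproj A l x)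
       = (\<Sum>l\<in>L. c l * d l * (x \<bullet> eigproj A l x))"
proof -
  have "(\<Sum>l\<in>L. c l *\<^sub>R eigproj A l x) \<bullet> (\<Sum>m\<in>L. d m *\<^sub>R eigproj A m x)
      = (\<Sum>l\<in>L. \<Sum>m\<in>L. c l * d m * (eigproj A l x \<bullet> eigproj A m x))"
    unfolding inner_sum_left by (simp add: inner_sum_right sum_distrib_left mult.assoc mult.left_commute)
  also have "\<dots> = (\<Sum>l\<in>L. \<Sum>m\<in>{l}. c l * d m * (eigproj A l x \<bullet> eigproj A m x))"
    using eigproj_orthogonal[OF sym] by (intro sum.cong refl sum.mono_neutral_right fin) auto
  finally show ?thesis by (simp add: inner_eigproj_self)
qed

lemma matrix_vector_sum_eigproj:
  "A *v (\<Sum>l\<in>L. c l *\<^sub>R eigproj A l x) = (\<Sum>l\<in>L. (c l * l) *\<^sub>R eigproj A l x)"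
  by (simp add: linear_sum[OF matrix_vector_mul_linear] matrix_vector_mult_scaleR eigproj_eigenvector)

lemma zero_diagonal_semidefinite_eq_0:
  fixes A :: "real^'n^'n"
  assumes sym: "transpose A = A" and diag: "\<forall>i. A $ i $ i = 0"
    and psd: "\<And>y. 0 \<le> y \<bullet> (A *v y)"
  shows "A = 0"
proof -
  have "A $ i $ j = 0" for i j
  proof (cases "i = j")
    case False
    have "A $ j $ i = A $ i $ j" using sym unfolding transpose_def by (metis vec_lambda_beta)
    then have q: "(axis i 1 + t *\<^sub>R axis j 1) \<bullet> (A *v (axis i 1 + t *\<^sub>R axis j 1)) = 2 * t * A $ i $ j"
      for t
      by (simp add: inner_add_left inner_add_right matrix_vector_right_distrib
          matrix_vector_mult_scaleR inner_axis' matrix_vector_mult_basis column_def diag algebra_simps)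
    show ?thesis using psd[of "axis i 1 + 1 *\<^sub>R axis j 1"] psd[of "axis i 1 + (-1) *\<^sub>R axis j 1"]
      unfolding q by simp
  qed (simp add: diag)
  then show ?thesis by (simp add: vec_eq_iff)
qed

lemma Min_eigvals_neg_Max_eigvals_pos:
  fixes A :: "real^'n^'n"
  assumes sym: "transpose A = A" and diag: "\<forall>i. A $ i $ i = 0" and "A \<noteq> 0"
  shows "Min (eigvals A) < 0" and "0 < Max (eigvals A)"
proof -
  show "Min (eigvals A) < 0"
  proof (rule ccontr)
    assume "\<not> Min (eigvals A) < 0"
    then have "0 \<le> y \<bullet> (A *v y)" for y
      using Min_eigvals(2)[OF sym, of y] by (meson inner_ge_zero mult_nonneg_nonneg not_less order_trans)
    then show False using zero_diagonal_semidefinite_eq_0[OF sym diag] \<open>A \<noteq> 0\<close> by blast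
  qed
  show "0 < Max (eigvals A)"
  proof (rule ccontr)
    assume "\<not> 0 < Max (eigvals A)"
    then have "0 \<le> y \<bullet> ((- A) *v y)" for y
      using Max_eigvals(2)[OF sym, of y]
      by (simp add: matrix_vector_mult_uminus_left mult_nonpos_nonneg order_trans)
    moreover have "transpose (- A) = - A" "\<forall>i. (- A) $ i $ i = 0"
      using sym diag by (simp_all add: transpose_uminus)
    ultimately show False using zero_diagonal_semidefinite_eq_0[of "- A"] \<open>A \<noteq> 0\<close> by simp
  qed
qed

section \<open>Sums of simple poles\<close>

definition pole_sum :: "real set \<Rightarrow> (real \<Rightarrow> real) \<Rightarrow> real \<Rightarrow> real" where
  "pole_sum L w x = (\<Sum>l\<in>L. w l / (1 - l * x))"

definition pole_sum_deriv :: "real set \<Rightarrow> (real \<Rightarrow> real) \<Rightarrow> real \<Rightarrow> real" where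
  "pole_sum_deriv L w x = (\<Sum>l\<in>L. w l * l / (1 - l * x)\<^sup>2)"

lemma inverse_ge_tangent:
  fixes r s :: real
  assumes "0 < r" "0 < s"
  shows "1 / s + (s - r) / s\<^sup>2 \<le> 1 / r"
proof -
  have "0 \<le> (s - r)\<^sup>2 / (r * s\<^sup>2)" using assms by simp
  also have "\<dots> = 1 / r - 1 / s - (s - r) / s\<^sup>2" using assms by (simp add: field_simps power2_eq_square)
  finally show ?thesis by simp
qed

lemma pole_sum_tangent:
  assumes "finite L" "\<forall>l\<in>L. 0 \<le> w l" "\<forall>l\<in>L. l * x < 1" "\<forall>l\<in>L. l * x0 < 1"
  shows "pole_sum L w x0 + pole_sum_deriv L w x0 * (x - x0) \<le> pole_sum L w x"
proof -
  have "w l / (1 - l * x0) + w l * l / (1 - l * x0)\<^sup>2 * (x - x0) \<le> w l / (1 - l * x)"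
    if "l \<in> L" for l
  proof -
    have "w l * (1 / (1 - l * x0) + ((1 - l * x0) - (1 - l * x)) / (1 - l * x0)\<^sup>2)
        \<le> w l * (1 / (1 - l * x))"
      using inverse_ge_tangent[of "1 - l * x" "1 - l * x0"] assms(2-4) that
      by (intro mult_left_mono) auto
    then show ?thesis by (simp add: algebra_simps add_divide_distrib diff_divide_distrib)
  qed
  then have "(\<Sum>l\<in>L. w l / (1 - l * x0) + w l * l / (1 - l * x0)\<^sup>2 * (x - x0)) \<le> pole_sum L w x"
    unfolding pole_sum_def by (intro sum_mono) auto
  then show ?thesis
    unfolding pole_sum_def pole_sum_deriv_def by (simp add: sum.distrib sum_distrib_right)
qed

lemma mult_le_1_on_reciprocal_interval:
  fixes l x lmin lmax :: real
  assumes "lmin < 0" "0 < lmax" "l \<in> {lmin..lmax}" "x \<in> {1/lmin..1/lmax}"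
  shows "l * x \<le> 1"
proof (cases "0 \<le> x")
  case True
  then have "l * x \<le> lmax * x" using assms(3) by (simp add: mult_right_mono)
  also have "\<dots> \<le> 1" using assms(2,4) by (simp add: field_simps)
  finally show ?thesis .
next
  case False
  then have "l * x \<le> lmin * x" using assms(3) by (simp add: mult_right_mono_neg)
  also have "\<dots> \<le> 1" using assms(1,4) by (simp add: field_simps)
  finally show ?thesis .
qed

lemma mult_eq_1_on_reciprocal_interval:
  fixes l x lmin lmax :: real
  assumes "lmin < 0" "0 < lmax" "l \<in> {lmin..lmax}" "x \<in> {1/lmin..1/lmax}" "l * x = 1"
  shows "l = lmax \<and> x = 1/lmax \<or> l = lmin \<and> x = 1/lmin"
proof (cases "0 \<le> x")
  case True
  have "1 \<le> lmax * x"
    using assms(3,5) True by (metis atLeastAtMost_iff mult_right_mono)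
  moreover have "lmax * x \<le> 1" using assms(2,4) by (simp add: field_simps)
  ultimately have "lmax * x = 1" by linarith
  then have "x = 1/lmax" "l = lmax"
    using assms(2,5) by (simp_all add: field_simps) (metis mult_cancel_right mult_zero_right zero_neq_one)
  then show ?thesis by simp
next
  case False
  have "1 \<le> lmin * x"
    using assms(3,5) False by (metis atLeastAtMost_iff mult_right_mono_neg not_le less_imp_le)
  moreover have "lmin * x \<le> 1" using assms(1,4) by (simp add: field_simps)
  ultimately have "lmin * x = 1" by linarith
  then have "x = 1/lmin" "l = lmin"
    using assms(1,5) by (simp_all add: field_simps) (metis mult_cancel_right mult_zero_right zero_neq_one)
  then show ?thesis by simp
qed

lemma pole_sum_deriv_pos_near_pole:
  assumes fin: "finite L" and w: "\<forall>l\<in>L. 0 < w l" and M: "M \<in> L" "0 < M"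
  obtains x where "0 \<le> x" "x < 1 / M" "0 < pole_sum_deriv L w x"
proof -
  \<comment> \<open>Only the term at \<open>M\<close> blows up; for \<open>x \<ge> 0\<close> every other term is at least \<open>-\<bar>w l * l\<bar>\<close>.\<close>
  define K where "K = (\<Sum>l\<in>L. \<bar>w l * l\<bar>)"
  define c where "c = w M * M"
  define s where "s = c / (c + 2 * (K + 1))"
  define x where "x = (1 - s) / M"
  have "0 \<le> K" unfolding K_def by (simp add: sum_nonneg)
  moreover have "0 < c" unfolding c_def using w M by simp
  ultimately have s: "0 < s" "s < 1" "c / s = c + 2 * (K + 1)" unfolding s_def by (auto simp: field_simps)
  have x: "0 \<le> x" "x < 1 / M" "1 - M * x = s"
    unfolding x_def using M(2) s(1,2) by (auto simp: field_simps)
  have "- \<bar>w l * l\<bar> \<le> w l * l / (1 - l * x)\<^sup>2" if "l \<in> L" for l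
  proof (cases "0 \<le> l")
    case True
    then have "0 \<le> w l * l / (1 - l * x)\<^sup>2" using w that by (simp add: less_imp_le)
    then show ?thesis using abs_ge_zero[of "w l * l"] by linarith
  next
    case False
    then have d: "1 \<le> (1 - l * x)\<^sup>2" using x(1) by (simp add: mult_nonpos_nonneg)
    moreover have neg: "w l * l \<le> 0" using False w that by (simp add: mult_nonneg_nonpos less_imp_le)
    ultimately have "w l * l * (1 - l * x)\<^sup>2 \<le> w l * l * 1" by (rule mult_left_mono_neg)
    then have "w l * l \<le> w l * l / (1 - l * x)\<^sup>2" using d neg by (simp add: le_divide_eq)
    then show ?thesis by linarith
  qed
  then have "- (\<Sum>l\<in>L - {M}. \<bar>w l * l\<bar>) \<le> (\<Sum>l\<in>L - {M}. w l * l / (1 - l * x)\<^sup>2)"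
    unfolding sum_negf[symmetric] by (intro sum_mono) auto
  moreover have "(\<Sum>l\<in>L - {M}. \<bar>w l * l\<bar>) \<le> K" unfolding K_def using fin by (intro sum_mono2) auto
  moreover have "K < c / s\<^sup>2"
  proof -
    have "K < c + 2 * (K + 1)" using \<open>0 \<le> K\<close> \<open>0 < c\<close> by simp
    also have "\<dots> = c / s" using s(3) by simp
    also have "\<dots> \<le> c / s\<^sup>2" using s(1,2) \<open>0 < c\<close> by (simp add: frac_le power2_eq_square)
    finally show ?thesis .
  qed
  moreover have "pole_sum_deriv L w x = c / s\<^sup>2 + (\<Sum>l\<in>L - {M}. w l * l / (1 - l * x)\<^sup>2)"
    unfolding pole_sum_deriv_def c_def using fin M(1) x(3) by (simp add: sum.remove)
  ultimately have "0 < pole_sum_deriv L w x" by linarith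
  with x(1,2) that show thesis by blast
qed

lemma pole_sum_deriv_right_bracket:
  assumes fin: "finite L" and w: "\<forall>l\<in>L. 0 < w l" and lmax: "0 < lmax"
  obtains b where "0 \<le> b" "b \<le> 1/lmax"
    "b = 1/lmax \<and> lmax \<notin> L \<or> b < 1/lmax \<and> 0 < pole_sum_deriv L w b"
proof (cases "lmax \<in> L")
  case True
  then show thesis using pole_sum_deriv_pos_near_pole[OF fin w True lmax] that by force
next
  case False
  then show thesis using that[of "1/lmax"] lmax by simp
qed

lemma pole_sum_deriv_reflect:
  "pole_sum_deriv (uminus ` L) (\<lambda>l. w (- l)) x = - pole_sum_deriv L w (- x)"
  unfolding pole_sum_deriv_def by (subst sum.reindex) (auto simp: inj_on_def sum_negf[symmetric])

lemma pole_sum_deriv_left_bracket: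
  assumes fin: "finite L" and w: "\<forall>l\<in>L. 0 < w l" and lmin: "lmin < 0"
  obtains a where "1/lmin \<le> a" "a \<le> 0"
    "a = 1/lmin \<and> lmin \<notin> L \<or> 1/lmin < a \<and> pole_sum_deriv L w a < 0"
proof -
  obtain b where "0 \<le> b" "b \<le> 1 / (- lmin)"
    "b = 1 / (- lmin) \<and> - lmin \<notin> uminus ` L
      \<or> b < 1 / (- lmin) \<and> 0 < pole_sum_deriv (uminus ` L) (\<lambda>l. w (- l)) b"
    using pole_sum_deriv_right_bracket[of "uminus ` L" "\<lambda>l. w (- l)" "- lmin"] fin w lmin by auto
  then show thesis using that[of "- b"] lmin by (auto simp: pole_sum_deriv_reflect field_simps)
qed

lemma continuous_on_pole_sum_deriv:
  assumes "\<forall>x\<in>S. \<forall>l\<in>L. l * x \<noteq> 1"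
  shows "continuous_on S (pole_sum_deriv L w)"
  unfolding pole_sum_deriv_def using assms by (intro continuous_intros) auto

lemma pole_sum_critical_point:
  fixes lmin lmax :: real
  assumes fin: "finite L" and w: "\<forall>l\<in>L. 0 < w l" and signs: "lmin < 0" "0 < lmax"
    and range: "\<forall>l\<in>L. l \<in> {lmin..lmax}"
  obtains x0 where "x0 \<in> {1/lmin..1/lmax}" "\<forall>l\<in>L. l * x0 \<noteq> 1"
    "\<forall>x\<in>{1/lmin..1/lmax}. 0 \<le> pole_sum_deriv L w x0 * (x - x0)"
    "pole_sum_deriv L w x0 = 0 \<or> (\<exists>m\<in>{lmin, lmax} - L. m * x0 = 1)"
proof -
  let ?g = "pole_sum_deriv L w"
  obtain b where b: "0 \<le> b" "b \<le> 1/lmax"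
    and b_cases: "b = 1/lmax \<and> lmax \<notin> L \<or> b < 1/lmax \<and> 0 < ?g b"
    using pole_sum_deriv_right_bracket[OF fin w signs(2)] .
  obtain a where a: "1/lmin \<le> a" "a \<le> 0"
    and a_cases: "a = 1/lmin \<and> lmin \<notin> L \<or> 1/lmin < a \<and> ?g a < 0"
    using pole_sum_deriv_left_bracket[OF fin w signs(1)] .
  have nopole: "l * x \<noteq> 1" if "x \<in> {a..b}" "l \<in> L" for x l
  proof
    assume "l * x = 1"
    then have "l = lmax \<and> x = 1/lmax \<or> l = lmin \<and> x = 1/lmin"
      using mult_eq_1_on_reciprocal_interval[OF signs] range that a b by auto
    then show False using that a b a_cases b_cases by auto
  qed
  consider "?g b \<le> 0" | "0 \<le> ?g a" | "?g a < 0" "0 < ?g b" by linarith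
  then show thesis
  proof cases
    case 1
    then have "b = 1/lmax" "lmax \<notin> L" using b_cases by auto
    moreover have "\<forall>x\<in>{1/lmin..1/lmax}. 0 \<le> ?g b * (x - b)"
      using 1 \<open>b = 1/lmax\<close> by (auto intro: mult_nonpos_nonpos)
    ultimately show thesis
      using that[of b] nopole a b signs by force
  next
    case 2
    then have "a = 1/lmin" "lmin \<notin> L" using a_cases by auto
    moreover have "\<forall>x\<in>{1/lmin..1/lmax}. 0 \<le> ?g a * (x - a)"
      using 2 \<open>a = 1/lmin\<close> by auto
    ultimately show thesis
      using that[of a] nopole a b signs by force
  next
    case 3
    moreover have "continuous_on {a..b} ?g"
      using nopole by (intro continuous_on_pole_sum_deriv) auto
    ultimately obtain x where "x \<in> {a..b}" "?g x = 0"
      using IVT'[of ?g a 0 b] a b by auto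
    then show thesis using that[of x] nopole a b by auto
  qed
qed

lemma pole_sum_minimum:
  fixes lmin lmax :: real
  assumes fin: "finite L" and w: "\<forall>l\<in>L. 0 < w l" and signs: "lmin < 0" "0 < lmax"
    and range: "\<forall>l\<in>L. l \<in> {lmin..lmax}"
    and x0: "x0 \<in> {1/lmin..1/lmax}" "\<forall>l\<in>L. l * x0 \<noteq> 1"
    and x: "x \<in> {1/lmin..1/lmax}" "\<forall>l\<in>L. l * x \<noteq> 1"
    and first_order: "0 \<le> pole_sum_deriv L w x0 * (x - x0)"
  shows "pole_sum L w x0 \<le> pole_sum L w x"
proof -
  have below_pole: "l * y < 1" if "y \<in> {1/lmin..1/lmax}" "l \<in> L" "l * y \<noteq> 1" for l y
    using mult_le_1_on_reciprocal_interval[OF signs, of l y] range that by fastforce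
  have "pole_sum L w x0 + pole_sum_deriv L w x0 * (x - x0) \<le> pole_sum L w x"
    using x0 x w by (intro pole_sum_tangent fin) (auto intro: below_pole less_imp_le)
  then show ?thesis using first_order by linarith
qed

section \<open>Main eigenvalues and the resolvent of the all-ones vector\<close>

definition main_weight :: "real^'n^'n \<Rightarrow> real \<Rightarrow> real" where
  "main_weight A l = ones \<bullet> eigproj A l ones"

definition main_eigvals :: "real^'n^'n \<Rightarrow> real set" where
  "main_eigvals A = {l \<in> eigvals A. main_weight A l \<noteq> 0}"

abbreviation walk_sum :: "real^'n^'n \<Rightarrow> real \<Rightarrow> real" where
  "walk_sum A \<equiv> pole_sum (main_eigvals A) (main_weight A)"

abbreviation walk_sum_deriv :: "real^'n^'n \<Rightarrow> real \<Rightarrow> real" where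
  "walk_sum_deriv A \<equiv> pole_sum_deriv (main_eigvals A) (main_weight A)"

lemma W_A_eq_walk_sum:
  "W_A A x = (if \<exists>l\<in>main_eigvals A. l * x = 1 then PInfty else ereal (walk_sum A x))"
  by (simp add: W_A_def main_eigvals_def main_weight_def pole_sum_def Let_def)

lemma finite_main_eigvals:
  fixes A :: "real^'n^'n"
  assumes "transpose A = A"
  shows "finite (main_eigvals A)"
  using finite_eigvals[OF assms] unfolding main_eigvals_def by simp

lemma main_weight_pos: "\<forall>l\<in>main_eigvals A. 0 < main_weight A l"
  unfolding main_eigvals_def main_weight_def by (auto simp: inner_eigproj_self order.strict_iff_order)

lemma eigproj_ones_eq_0: "main_weight A l = 0 \<Longrightarrow> eigproj A l ones = 0"
  unfolding main_weight_def by (simp add: inner_eigproj_self)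

lemma sum_main_eigproj:
  fixes A :: "real^'n^'n"
  assumes sym: "transpose A = A"
  shows "(\<Sum>l\<in>main_eigvals A. eigproj A l ones) = ones"
proof -
  have "(\<Sum>l\<in>main_eigvals A. eigproj A l ones) = (\<Sum>l\<in>eigvals A. eigproj A l ones)"
    using eigproj_ones_eq_0 by (intro sum.mono_neutral_left finite_eigvals[OF sym]) (auto simp: main_eigvals_def)
  then show ?thesis using sum_eigproj[OF sym] by simp
qed

lemma ones_orthogonal_non_main_eigenvector:
  assumes "A *v z = m *\<^sub>R z" "main_weight A m = 0"
  shows "ones \<bullet> z = 0"
  using eigproj_residual_orthogonal[OF assms(1), of ones] eigproj_ones_eq_0[OF assms(2)] by simp

definition resolvent_ones :: "real^'n^'n \<Rightarrow> real \<Rightarrow> real^'n" where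
  "resolvent_ones A x = (\<Sum>l\<in>main_eigvals A. (1 / (1 - l * x)) *\<^sub>R eigproj A l ones)"

lemma resolvent_ones_eq:
  fixes A :: "real^'n^'n"
  assumes sym: "transpose A = A" and nopole: "\<forall>l\<in>main_eigvals A. l * x \<noteq> 1"
  shows "resolvent_ones A x - x *\<^sub>R (A *v resolvent_ones A x) = ones"
proof -
  have "resolvent_ones A x - x *\<^sub>R (A *v resolvent_ones A x)
      = (\<Sum>l\<in>main_eigvals A. (1 / (1 - l * x) - x * (1 / (1 - l * x) * l)) *\<^sub>R eigproj A l ones)"
    unfolding resolvent_ones_def matrix_vector_sum_eigproj
    by (simp add: scaleR_sum_right sum_subtractf[symmetric] scaleR_diff_left)
  also have "\<dots> = (\<Sum>l\<in>main_eigvals A. eigproj A l ones)"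
    using nopole by (intro sum.cong refl) (simp add: field_simps)
  finally show ?thesis using sum_main_eigproj[OF sym] by simp
qed

lemma inner_ones_resolvent_ones: "ones \<bullet> resolvent_ones A x = walk_sum A x"
  unfolding resolvent_ones_def pole_sum_def main_weight_def by (simp add: inner_sum_right mult.commute)

lemma resolvent_ones_quadratic:
  fixes A :: "real^'n^'n"
  assumes sym: "transpose A = A"
  shows "resolvent_ones A x \<bullet> (A *v resolvent_ones A x) = walk_sum_deriv A x"
  unfolding resolvent_ones_def matrix_vector_sum_eigproj pole_sum_deriv_def main_weight_def
    inner_sum_eigproj[OF sym finite_main_eigvals[OF sym]]
  by (intro sum.cong refl) (simp add: power2_eq_square)

lemma inner_ones_minus_norm_resolvent_ones:
  fixes A :: "real^'n^'n"
  assumes sym: "transpose A = A"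
  shows "ones \<bullet> resolvent_ones A x - resolvent_ones A x \<bullet> resolvent_ones A x = - x * walk_sum_deriv A x"
proof -
  have "resolvent_ones A x \<bullet> resolvent_ones A x
      = (\<Sum>l\<in>main_eigvals A. 1 / (1 - l * x) * (1 / (1 - l * x)) * main_weight A l)"
    unfolding resolvent_ones_def main_weight_def by (rule inner_sum_eigproj[OF sym finite_main_eigvals[OF sym]])
  moreover have "main_weight A l / (1 - l * x) - 1 / (1 - l * x) * (1 / (1 - l * x)) * main_weight A l
      = - x * (main_weight A l * l / (1 - l * x)\<^sup>2)" for l
  proof (cases "l * x = 1")
    case False
    define d where "d = 1 - l * x"
    have "d \<noteq> 0" using False by (simp add: d_def)
    then have "main_weight A l / d - 1 / d * (1 / d) * main_weight A l = (d - 1) * main_weight A l / d\<^sup>2"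
      by (simp add: field_simps power2_eq_square)
    also have "d - 1 = - l * x" by (simp add: d_def)
    finally show ?thesis unfolding d_def by (simp add: algebra_simps)
  qed simp
  ultimately show ?thesis
    unfolding inner_ones_resolvent_ones pole_sum_def pole_sum_deriv_def
    by (simp add: sum_subtractf[symmetric] sum_distrib_left)
qed

lemma resolvent_ones_orthogonal_eigenvector:
  fixes A :: "real^'n^'n"
  assumes sym: "transpose A = A" and z: "A *v z = m *\<^sub>R z" and m: "m \<notin> main_eigvals A"
  shows "resolvent_ones A x \<bullet> z = 0"
proof -
  have "eigproj A l ones \<bullet> z = 0" if "l \<in> main_eigvals A" for l
    using that m by (intro eigenvectors_orthogonal[OF sym eigproj_eigenvector z]) auto
  then show ?thesis unfolding resolvent_ones_def inner_sum_left by simp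
qed

lemma norm_sq_le_walk_sum:
  fixes A :: "real^'n^'n"
  assumes sym: "transpose A = A" and nopole: "\<forall>l\<in>main_eigvals A. l * x \<noteq> 1"
    and psd: "\<And>y. x * (y \<bullet> (A *v y)) \<le> y \<bullet> y"
    and v: "ones \<bullet> v = (norm v)\<^sup>2" "v \<bullet> (A *v v) = 0"
  shows "(norm v)\<^sup>2 \<le> walk_sum A x"
proof -
  define u where "u = resolvent_ones A x"
  define Q where "Q y = y \<bullet> y - x * (y \<bullet> (A *v y))" for y
  have "(A *v u) \<bullet> v = u \<bullet> (A *v v)" by (rule inner_matrix_vector_symmetric[OF sym])
  then have "Q (u - v) = Q u - 2 * ((u - x *\<^sub>R (A *v u)) \<bullet> v) + Q v"
    unfolding Q_def
    by (simp add: inner_diff_left inner_diff_right matrix_vector_mult_diff_distrib algebra_simps inner_commute)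
  also have "Q u = u \<bullet> (u - x *\<^sub>R (A *v u))"
    unfolding Q_def by (simp add: inner_diff_right)
  also have "u - x *\<^sub>R (A *v u) = ones" unfolding u_def by (rule resolvent_ones_eq[OF sym nopole])
  also have "Q v = (norm v)\<^sup>2" unfolding Q_def using v(2) by (simp add: power2_norm_eq_inner)
  finally have "Q (u - v) = walk_sum A x - (norm v)\<^sup>2"
    using v(1) inner_ones_resolvent_ones[of A x] unfolding u_def by (simp add: inner_commute)
  moreover have "0 \<le> Q (u - v)" unfolding Q_def using psd by simp
  ultimately show ?thesis by simp
qed

lemma eigenvector_with_norm_sq:
  fixes A :: "real^'n^'n"
  assumes "m \<in> eigvals A" and "0 \<le> c"
  obtains z where "A *v z = m *\<^sub>R z" "z \<bullet> z = c"
proof -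
  obtain e where e: "e \<noteq> 0" "A *v e = m *\<^sub>R e" using assms(1) unfolding eigvals_def by blast
  define z where "z = (sqrt c / norm e) *\<^sub>R e"
  have "A *v z = m *\<^sub>R z" unfolding z_def using e(2) by (simp add: matrix_vector_mult_scaleR)
  moreover have "z \<bullet> z = c" unfolding z_def using e(1) \<open>0 \<le> c\<close>
    by (simp add: power2_norm_eq_inner[symmetric] power_divide)
  ultimately show thesis by (rule that)
qed

lemma walk_sum_attained:
  fixes A :: "real^'n^'n"
  assumes sym: "transpose A = A" and nopole: "\<forall>l\<in>main_eigvals A. l * x \<noteq> 1"
    and sign: "0 \<le> - x * walk_sum_deriv A x"
    and crit: "walk_sum_deriv A x = 0 \<or> (\<exists>m\<in>eigvals A - main_eigvals A. m * x = 1)"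
  obtains v where "ones \<bullet> v = (norm v)\<^sup>2" "v \<bullet> (A *v v) = 0" "(norm v)\<^sup>2 = walk_sum A x"
proof -
  \<comment> \<open>\<open>v = u + z\<close>, where \<open>z = 0\<close> at a critical point and otherwise an eigenvector for \<open>1/x\<close>
    whose energy \<open>z \<bullet> (A *v z) = - walk_sum_deriv A x\<close> cancels that of \<open>u\<close>.\<close>
  define u where "u = resolvent_ones A x"
  let ?g = "walk_sum_deriv A x"
  obtain z where z: "ones \<bullet> z = 0" "u \<bullet> z = 0" "u \<bullet> (A *v z) = 0"
    "z \<bullet> z = - x * ?g" "z \<bullet> (A *v z) = - ?g"
  proof (cases "?g = 0")
    case False
    then obtain m where m: "m \<in> eigvals A" "m \<notin> main_eigvals A" "m * x = 1" using crit by blast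
    obtain z where z: "A *v z = m *\<^sub>R z" "z \<bullet> z = - x * ?g"
      using eigenvector_with_norm_sq[OF m(1) sign] .
    have "main_weight A m = 0" using m(1,2) unfolding main_eigvals_def by simp
    then have "ones \<bullet> z = 0" by (rule ones_orthogonal_non_main_eigenvector[OF z(1)])
    moreover have "u \<bullet> z = 0"
      unfolding u_def by (rule resolvent_ones_orthogonal_eigenvector[OF sym z(1) m(2)])
    moreover from this have "u \<bullet> (A *v z) = 0" using z(1) by simp
    moreover note z(2)
    moreover have "z \<bullet> (A *v z) = - ?g" using z(1,2) m(3) by (simp add: mult.assoc[symmetric])
    ultimately show thesis by (rule that)
  qed (use that[of 0] in simp)
  have norm_eq: "(norm (u + z))\<^sup>2 = ones \<bullet> u"
    using z(2,4) inner_ones_minus_norm_resolvent_ones[OF sym, of x] unfolding u_def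
    by (simp add: power2_norm_eq_inner inner_add_left inner_add_right inner_commute)
  show thesis
  proof (rule that[of "u + z"])
    show "ones \<bullet> (u + z) = (norm (u + z))\<^sup>2"
      using z(1) norm_eq by (simp add: inner_add_right)
    show "(norm (u + z))\<^sup>2 = walk_sum A x"
      using norm_eq inner_ones_resolvent_ones unfolding u_def by simp
    have "(u + z) \<bullet> (A *v (u + z)) = u \<bullet> (A *v u) + z \<bullet> (A *v z)"
      using z(2,3) inner_matrix_vector_symmetric[OF sym, of z u]
      by (simp add: inner_add_left inner_add_right matrix_vector_right_distrib inner_commute)
    then show "(u + z) \<bullet> (A *v (u + z)) = 0"
      using z(5) resolvent_ones_quadratic[OF sym] unfolding u_def by simp
  qed
qed

lemma SUP_S_set_eq_walk_sum:
  fixes A :: "real^'n^'n"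
  assumes sym: "transpose A = A" and nopole: "\<forall>l\<in>main_eigvals A. l * x \<noteq> 1"
    and psd: "\<And>y. x * (y \<bullet> (A *v y)) \<le> y \<bullet> y"
    and sign: "0 \<le> - x * walk_sum_deriv A x"
    and crit: "walk_sum_deriv A x = 0 \<or> (\<exists>m\<in>eigvals A - main_eigvals A. m * x = 1)"
  shows "(SUP v \<in> {v \<in> S_set. v \<bullet> (A *v v) = 0}. ereal ((norm v)\<^sup>2)) = ereal (walk_sum A x)"
proof (rule SUP_eqI)
  show "ereal ((norm v)\<^sup>2) \<le> ereal (walk_sum A x)" if "v \<in> {v \<in> S_set. v \<bullet> (A *v v) = 0}" for v
    using norm_sq_le_walk_sum[OF sym nopole psd] that unfolding S_set_def by simp
  obtain v where "ones \<bullet> v = (norm v)\<^sup>2" "v \<bullet> (A *v v) = 0" "(norm v)\<^sup>2 = walk_sum A x"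
    using walk_sum_attained[OF sym nopole sign crit] .
  then show "ereal (walk_sum A x) \<le> y"
    if "\<And>v. v \<in> {v \<in> S_set. v \<bullet> (A *v v) = 0} \<Longrightarrow> ereal ((norm v)\<^sup>2) \<le> y" for y
    using that[of v] unfolding S_set_def by simp
qed

lemma quadratic_form_le_on_reciprocal_interval:
  fixes A :: "real^'n^'n"
  assumes sym: "transpose A = A" and signs: "Min (eigvals A) < 0" "0 < Max (eigvals A)"
    and x: "x \<in> {1 / Min (eigvals A) .. 1 / Max (eigvals A)}"
  shows "x * (y \<bullet> (A *v y)) \<le> y \<bullet> y"
proof (cases "0 \<le> x")
  case True
  then have "x * (y \<bullet> (A *v y)) \<le> (x * Max (eigvals A)) * (y \<bullet> y)"
    using Max_eigvals(2)[OF sym, of y] by (simp add: mult_left_mono mult.assoc)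
  also have "\<dots> \<le> y \<bullet> y"
    using x signs(2) True by (intro mult_left_le_one_le) (auto simp: field_simps)
  finally show ?thesis .
next
  case False
  then have "x * (y \<bullet> (A *v y)) \<le> (x * Min (eigvals A)) * (y \<bullet> y)"
    using Min_eigvals(2)[OF sym, of y] by (simp add: mult_left_mono_neg mult.assoc)
  also have "\<dots> \<le> y \<bullet> y"
    using x signs(1) False by (intro mult_left_le_one_le) (auto simp: field_simps zero_le_mult_iff)
  finally show ?thesis .
qed

theorem proposition2:
  fixes E :: "'n::finite \<Rightarrow> 'n \<Rightarrow> bool" and A :: "real^'n^'n"
  assumes "CARD('n) \<ge> 3"
    and "\<forall>i j. E i j \<longrightarrow> E j i" and "\<forall>i. \<not> E i i"
    and "weighted_adj E A" and "A \<noteq> 0"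
  shows "\<exists>x0 \<in> {1 / Min (eigvals A) .. 1 / Max (eigvals A)}.
           (\<forall>x \<in> {1 / Min (eigvals A) .. 1 / Max (eigvals A)}. W_A A x0 \<le> W_A A x) \<and>
           W_A A x0 = (SUP v \<in> {v \<in> S_set. v \<bullet> (A *v v) = 0}. ereal ((norm v)\<^sup>2))"
proof -
  have sym: "transpose A = A" and diag: "\<forall>i. A $ i $ i = 0"
    using assms(4) unfolding weighted_adj_def by auto
  let ?I = "{1 / Min (eigvals A) .. 1 / Max (eigvals A)}"
  have signs: "Min (eigvals A) < 0" "0 < Max (eigvals A)"
    using Min_eigvals_neg_Max_eigvals_pos[OF sym diag assms(5)] by auto
  have range: "\<forall>l\<in>main_eigvals A. l \<in> {Min (eigvals A) .. Max (eigvals A)}"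
    using finite_eigvals[OF sym] by (auto simp: main_eigvals_def)
  note walk = finite_main_eigvals[OF sym] main_weight_pos signs range
  obtain x0 where x0: "x0 \<in> ?I" "\<forall>l\<in>main_eigvals A. l * x0 \<noteq> 1"
    and first_order: "\<forall>x\<in>?I. 0 \<le> walk_sum_deriv A x0 * (x - x0)"
    and crit: "walk_sum_deriv A x0 = 0
      \<or> (\<exists>m\<in>{Min (eigvals A), Max (eigvals A)} - main_eigvals A. m * x0 = 1)"
    by (rule pole_sum_critical_point[OF walk])
  have "W_A A x0 \<le> W_A A x" if "x \<in> ?I" for x
    using pole_sum_minimum[OF walk x0 that] first_order that x0(2) by (auto simp: W_A_eq_walk_sum)
  moreover have "0 \<le> - x0 * walk_sum_deriv A x0"
    using first_order[rule_format, of 0] signs by (simp add: mult.commute)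
  then have "(SUP v \<in> {v \<in> S_set. v \<bullet> (A *v v) = 0}. ereal ((norm v)\<^sup>2)) = W_A A x0"
    using SUP_S_set_eq_walk_sum[OF sym x0(2) quadratic_form_le_on_reciprocal_interval[OF sym signs x0(1)]]
      crit Min_eigvals(1)[OF sym] Max_eigvals(1)[OF sym] x0(2)
    by (auto simp: W_A_eq_walk_sum)
  ultimately show ?thesis using x0(1) by (intro bexI[of _ x0]) auto
qed

end
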